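(* Let $K_{n_1,n_2}$ be the complete bipartite graph with parts $V_1,V_2$, where $n_1=|V_1|\ge 2$ and $n_2=|V_2|\ge 2$. Then the clique number of the 1-skeleton of its cut polytope satisfies $$\omega(\mathrm{CUT}(K_{n_1,n_2}))\ge 2^{\min\{n_1,n_2\}-1}.$$
   Context: For an undirected graph $G=(V,E)$ and $S\subseteq V$, $\delta(S)\subseteq E$ denotes the set of edges with exactly one endpoint in $S$, and $\mathbf v(S)\in\{0,1\}^{E}$ is its incidence vector ($v(S)_e=1$ iff $e\in\delta(S)$). The cut polytope is $\mathrm{CUT}(G)=\operatorname{conv}\{\mathbf v(S):S\subseteq V\}\subset\mathbb R^{E}$. The 1-skeleton of a polytope is the graph whose vertices are the polytope's vertices and whose edges are its one-dimensional faces; $\omega$ denotes its clique number. *)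

theory Defs
  imports "HOL-Analysis.Analysis"
begin

text \<open>Complete bipartite graph K_{n1,n2}: vertex set 'a + 'b (parts V1 = Inl ` UNIV,
  V2 = Inr ` UNIV), edge set 'a \<times> 'b (edge (i,j) joins Inl i and Inr j).\<close>

definition cut_vector :: "('a::finite + 'b::finite) set \<Rightarrow> real^('a \<times> 'b)" where
  "cut_vector S = (\<chi> e. if (Inl (fst e) \<in> S) \<noteq> (Inr (snd e) \<in> S) then 1 else 0)"

definition cut_polytope_Kbip :: "(real^('a::finite \<times> 'b::finite)) set" where
  "cut_polytope_Kbip = convex hull (range cut_vector)"

definition skeleton_adjacent :: "'v::euclidean_space set \<Rightarrow> 'v \<Rightarrow> 'v \<Rightarrow> bool" where
  "skeleton_adjacent P u v \<longleftrightarrow> u \<noteq> v \<and> u extreme_point_of P \<and> v extreme_point_of P \<and>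
     (\<exists>F. F face_of P \<and> aff_dim F = 1 \<and> u \<in> F \<and> v \<in> F)"

definition skeleton_clique :: "'v::euclidean_space set \<Rightarrow> 'v set \<Rightarrow> bool" where
  "skeleton_clique P C \<longleftrightarrow> C \<subseteq> {x. x extreme_point_of P} \<and>
     (\<forall>u\<in>C. \<forall>v\<in>C. u \<noteq> v \<longrightarrow> skeleton_adjacent P u v)"

definition skeleton_clique_number_ge :: "'v::euclidean_space set \<Rightarrow> nat \<Rightarrow> bool" where
  "skeleton_clique_number_ge P k \<longleftrightarrow> (\<exists>C. finite C \<and> card C = k \<and> skeleton_clique P C)"

end

theory Submission
  imports Defs
begin

text \<open>Take a matching \<open>M\<close> of size \<open>k = min n\<^sub>1 n\<^sub>2\<close> and one edge \<open>p\<^sub>0 \<in> M\<close>. For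
  \<open>T \<subseteq> M - {p\<^sub>0}\<close> let \<open>S\<^sub>T\<close> be the set of endpoints of the edges in \<open>T\<close>; these \<open>2^(k-1)\<close>
  cuts are pairwise distinct. For \<open>T \<noteq> T'\<close> the inequalities \<open>x\<^sub>e \<le> 1\<close> on the edges cut by
  both \<open>S\<^sub>T\<close> and \<open>S\<^sub>T\<^sub>'\<close> and \<open>x\<^sub>e \<ge> 0\<close> on the edges cut by neither define a face of the cut
  polytope whose vertices are the cuts agreeing with \<open>S\<^sub>T\<close> and \<open>S\<^sub>T\<^sub>'\<close> on these edges. Such a
  cut \<open>X\<close> differs from \<open>S\<^sub>T\<close> by a vertex set that is constant on the symmetric difference
  \<open>U\<close> of \<open>S\<^sub>T\<close> and \<open>S\<^sub>T\<^sub>'\<close> and on its complement, because both contain an edge of \<open>M\<close> and so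
  induce connected bipartite subgraphs. Hence \<open>\<delta>(X)\<close> is \<open>\<delta>(S\<^sub>T)\<close> or \<open>\<delta>(S\<^sub>T\<^sub>')\<close>, the face is the
  segment between the two cut vectors, and they are adjacent.\<close>

lemma face_of_convex_hull_finite:
  fixes V :: "'a::euclidean_space set"
  assumes "finite V" and F: "F face_of convex hull V"
  shows "F = convex hull (F \<inter> V)"
proof
  obtain V' where V': "V' \<subseteq> V" "F = convex hull V'"
    using face_of_convex_hull_subset[OF finite_imp_compact[OF \<open>finite V\<close>] F] by blast
  then have "V' \<subseteq> F \<inter> V" by (auto intro: hull_inc)
  then show "F \<subseteq> convex hull (F \<inter> V)" using V'(2) by (simp add: hull_mono)
  show "convex hull (F \<inter> V) \<subseteq> F"
    using face_of_imp_convex[OF F] by (simp add: hull_minimal)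
qed

lemma extreme_point_of_convex_hull_finite:
  fixes V :: "'a::euclidean_space set"
  assumes "finite V" "F face_of convex hull V" "F \<inter> V = {u}"
  shows "u extreme_point_of convex hull V"
  using face_of_convex_hull_finite[OF assms(1,2)] assms(2,3) by (simp flip: face_of_singleton)

lemma skeleton_adjacent_convex_hull_finite:
  fixes V :: "'a::euclidean_space set"
  assumes "finite V" and F: "F face_of convex hull V" "F \<inter> V = {u, v}" and "u \<noteq> v"
    and "u extreme_point_of convex hull V" "v extreme_point_of convex hull V"
  shows "skeleton_adjacent (convex hull V) u v"
proof -
  have "F = convex hull {u, v}"
    using face_of_convex_hull_finite[OF \<open>finite V\<close> F(1)] F(2) by simp
  then have "aff_dim F = 1" "u \<in> F" "v \<in> F"
    using \<open>u \<noteq> v\<close> by (auto simp: aff_dim_convex_hull hull_inc)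
  then show ?thesis
    using assms unfolding skeleton_adjacent_def by blast
qed

definition in_cut :: "('a + 'b) set \<Rightarrow> 'a \<times> 'b \<Rightarrow> bool" where
  "in_cut X e \<longleftrightarrow> (Inl (fst e) \<in> X) \<noteq> (Inr (snd e) \<in> X)"

lemma cut_vector_nth: "cut_vector X $ e = (if in_cut X e then 1 else 0)"
  by (simp add: cut_vector_def in_cut_def)

lemma cut_vector_eqI: "(\<And>e. in_cut X e = in_cut Y e) \<Longrightarrow> cut_vector X = cut_vector Y"
  by (simp add: vec_eq_iff cut_vector_nth)

lemma cut_vector_eq_imp_eq:
  assumes eq: "cut_vector X = cut_vector Y" and "Inl a \<in> X \<longleftrightarrow> Inl a \<in> Y"
  shows "X = Y"
proof -
  have edge: "(Inl a' \<in> X \<longleftrightarrow> Inl a' \<in> Y) \<longleftrightarrow> (Inr b \<in> X \<longleftrightarrow> Inr b \<in> Y)" for a' b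
    using arg_cong[OF eq, of "\<lambda>x. x $ (a', b)"] by (auto simp: cut_vector_nth in_cut_def split: if_splits)
  have "v \<in> X \<longleftrightarrow> v \<in> Y" for v
    using edge[of a] edge[of _ undefined] assms(2) by (cases v) blast+
  then show ?thesis by blast
qed

definition agrees_on_common_edges :: "('a + 'b) set \<Rightarrow> ('a + 'b) set \<Rightarrow> ('a + 'b) set \<Rightarrow> bool" where
  "agrees_on_common_edges S T X \<longleftrightarrow> (\<forall>e. in_cut S e = in_cut T e \<longrightarrow> in_cut X e = in_cut S e)"

definition agreement_vector :: "('a::finite + 'b::finite) set \<Rightarrow> ('a + 'b) set \<Rightarrow> real^('a \<times> 'b)" where
  "agreement_vector S T =
     (\<chi> e. if in_cut S e = in_cut T e then (if in_cut S e then 1 else -1) else 0)"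

lemma inner_agreement_vector:
  fixes S T X :: "('a::finite + 'b::finite) set"
  defines "b \<equiv> real (card {e. in_cut S e \<and> in_cut T e})"
  shows "agreement_vector S T \<bullet> cut_vector X \<le> b"
    and "agreement_vector S T \<bullet> cut_vector X = b \<longleftrightarrow> agrees_on_common_edges S T X"
proof -
  define f g where
    "f e = agreement_vector S T $ e * cut_vector X $ e" and
    "g e = (if in_cut S e \<and> in_cut T e then 1 else 0 :: real)" for e
  have fg: "f e \<le> g e" and fg_eq: "f e = g e \<longleftrightarrow> (in_cut S e = in_cut T e \<longrightarrow> in_cut X e = in_cut S e)"
    for e by (auto simp: f_def g_def agreement_vector_def cut_vector_nth)
  have sums: "agreement_vector S T \<bullet> cut_vector X = sum f UNIV" "b = sum g UNIV"
    by (simp_all add: inner_vec_def f_def g_def b_def sum.If_cases)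
  show "agreement_vector S T \<bullet> cut_vector X \<le> b"
    unfolding sums by (rule sum_mono) (rule fg)
  have "sum f UNIV = sum g UNIV \<longleftrightarrow> (\<forall>e. f e = g e)"
    using sum_mono_inv[of f UNIV g] fg by (auto intro: sum.cong)
  then show "agreement_vector S T \<bullet> cut_vector X = b \<longleftrightarrow> agrees_on_common_edges S T X"
    unfolding sums agrees_on_common_edges_def fg_eq by blast
qed

lemma cut_vector_in_cut_polytope: "cut_vector X \<in> cut_polytope_Kbip"
  unfolding cut_polytope_Kbip_def by (rule hull_inc) simp

lemma face_of_cut_polytope_agreeing:
  fixes S T :: "('a::finite + 'b::finite) set"
  obtains F where "F face_of (cut_polytope_Kbip :: (real^('a \<times> 'b)) set)"
    and "F \<inter> range cut_vector = cut_vector ` {X. agrees_on_common_edges S T X}"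
proof
  let ?c = "agreement_vector S T" and ?b = "real (card {e. in_cut S e \<and> in_cut T e})"
  have "cut_polytope_Kbip \<subseteq> {x. ?c \<bullet> x \<le> ?b}"
    unfolding cut_polytope_Kbip_def
    by (rule hull_minimal) (auto simp: convex_halfspace_le inner_agreement_vector(1))
  then show "(cut_polytope_Kbip \<inter> {x. ?c \<bullet> x = ?b}) face_of cut_polytope_Kbip"
    by (intro face_of_Int_supporting_hyperplane_le) (auto simp: cut_polytope_Kbip_def)
  show "cut_polytope_Kbip \<inter> {x. ?c \<bullet> x = ?b} \<inter> range cut_vector =
      cut_vector ` {X. agrees_on_common_edges S T X}"
    by (auto simp: cut_vector_in_cut_polytope inner_agreement_vector(2))
qed

lemma extreme_point_of_cut_polytope: "cut_vector S extreme_point_of cut_polytope_Kbip"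
proof -
  obtain F where "F face_of cut_polytope_Kbip"
    "F \<inter> range cut_vector = cut_vector ` {X. agrees_on_common_edges S S X}"
    using face_of_cut_polytope_agreeing .
  moreover have "cut_vector ` {X. agrees_on_common_edges S S X} = {cut_vector S}"
    by (auto simp: agrees_on_common_edges_def intro: cut_vector_eqI)
  ultimately show ?thesis
    unfolding cut_polytope_Kbip_def by (intro extreme_point_of_convex_hull_finite) auto
qed

lemma skeleton_adjacent_cut_polytope:
  assumes "\<And>X. agrees_on_common_edges S T X \<Longrightarrow> cut_vector X = cut_vector S \<or> cut_vector X = cut_vector T"
    and "cut_vector S \<noteq> cut_vector T"
  shows "skeleton_adjacent cut_polytope_Kbip (cut_vector S) (cut_vector T)"
proof -
  obtain F where "F face_of cut_polytope_Kbip"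
    "F \<inter> range cut_vector = cut_vector ` {X. agrees_on_common_edges S T X}"
    using face_of_cut_polytope_agreeing .
  moreover have "cut_vector ` {X. agrees_on_common_edges S T X} = {cut_vector S, cut_vector T}"
    using assms(1) by (auto simp: agrees_on_common_edges_def)
  ultimately show ?thesis
    using assms(2) extreme_point_of_cut_polytope unfolding cut_polytope_Kbip_def
    by (intro skeleton_adjacent_convex_hull_finite) auto
qed

lemma agreeing_cut_cases:
  assumes "(Inl a\<^sub>1 \<in> S) \<noteq> (Inl a\<^sub>1 \<in> T)" "(Inr b\<^sub>1 \<in> S) \<noteq> (Inr b\<^sub>1 \<in> T)"
    and "(Inl a\<^sub>0 \<in> S) = (Inl a\<^sub>0 \<in> T)" "(Inr b\<^sub>0 \<in> S) = (Inr b\<^sub>0 \<in> T)"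
    and agree: "agrees_on_common_edges S T X"
  shows "cut_vector X = cut_vector S \<or> cut_vector X = cut_vector T"
proof -
  define U where "U v \<longleftrightarrow> (v \<in> S) \<noteq> (v \<in> T)" for v
  define Y where "Y v \<longleftrightarrow> (v \<in> X) \<noteq> (v \<in> S)" for v
  have edge: "U (Inl a) = U (Inr b) \<Longrightarrow> Y (Inl a) = Y (Inr b)" for a b
    using agree unfolding agrees_on_common_edges_def
    by (auto simp: in_cut_def U_def Y_def dest: spec[of _ "(a, b)"])
  have U: "U (Inl a\<^sub>1)" "U (Inr b\<^sub>1)" "\<not> U (Inl a\<^sub>0)" "\<not> U (Inr b\<^sub>0)"
    using assms(1-4) by (simp_all add: U_def)
  have Y: "Y v = (if U v then Y (Inl a\<^sub>1) else Y (Inl a\<^sub>0))" for v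
  proof (cases v)
    case (Inl a)
    then show ?thesis
      using U edge[of a b\<^sub>1] edge[of a\<^sub>1 b\<^sub>1] edge[of a b\<^sub>0] edge[of a\<^sub>0 b\<^sub>0] by (cases "U v") simp_all
  next
    case (Inr b)
    then show ?thesis using U edge[of a\<^sub>1 b] edge[of a\<^sub>0 b] by (cases "U v") simp_all
  qed
  show ?thesis
  proof (cases "Y (Inl a\<^sub>1) = Y (Inl a\<^sub>0)")
    case True
    then have "in_cut X e = in_cut S e" for e
      using Y[of "Inl (fst e)"] Y[of "Inr (snd e)"] by (auto simp: in_cut_def Y_def split: if_splits)
    then show ?thesis by (auto intro: cut_vector_eqI)
  next
    case False
    then have "in_cut X e = in_cut T e" for e
      using Y[of "Inl (fst e)"] Y[of "Inr (snd e)"]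
      by (auto simp: in_cut_def Y_def U_def split: if_splits)
    then show ?thesis by (auto intro: cut_vector_eqI)
  qed
qed

definition bipartite_matching :: "('a \<times> 'b) set \<Rightarrow> bool" where
  "bipartite_matching M \<longleftrightarrow> (\<forall>p\<in>M. \<forall>q\<in>M. fst p = fst q \<longleftrightarrow> snd p = snd q)"

definition endpoints :: "('a \<times> 'b) set \<Rightarrow> ('a + 'b) set" where
  "endpoints T = Inl ` fst ` T \<union> Inr ` snd ` T"

lemma endpoints_of_matching_iff:
  assumes "bipartite_matching M" "T \<subseteq> M" "(a, b) \<in> M"
  shows "Inl a \<in> endpoints T \<longleftrightarrow> (a, b) \<in> T" and "Inr b \<in> endpoints T \<longleftrightarrow> (a, b) \<in> T"
proof -
  have "a' = a \<longleftrightarrow> b' = b" if "(a', b') \<in> T" for a' b'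
    using assms that unfolding bipartite_matching_def by fastforce
  then show "Inl a \<in> endpoints T \<longleftrightarrow> (a, b) \<in> T" "Inr b \<in> endpoints T \<longleftrightarrow> (a, b) \<in> T"
    unfolding endpoints_def by force+
qed

lemma inj_on_cut_vector_endpoints:
  assumes M: "bipartite_matching M" and "(a\<^sub>0, b\<^sub>0) \<in> M"
  shows "inj_on (\<lambda>T. cut_vector (endpoints T)) (Pow (M - {(a\<^sub>0, b\<^sub>0)}))"
proof
  fix T T' assume T: "T \<in> Pow (M - {(a\<^sub>0, b\<^sub>0)})" "T' \<in> Pow (M - {(a\<^sub>0, b\<^sub>0)})"
    and eq: "cut_vector (endpoints T) = cut_vector (endpoints T')"
  then have TM: "T \<subseteq> M" "T' \<subseteq> M" by auto
  note endpoints = endpoints_of_matching_iff(1)[OF M TM(1)] endpoints_of_matching_iff(1)[OF M TM(2)]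
  have "endpoints T = endpoints T'"
    by (rule cut_vector_eq_imp_eq[OF eq]) (use endpoints[OF \<open>(a\<^sub>0, b\<^sub>0) \<in> M\<close>] T in auto)
  then have "p \<in> T \<longleftrightarrow> p \<in> T'" if "p \<in> M" for p
    using endpoints that by (cases p) simp
  then show "T = T'" using TM by blast
qed

lemma skeleton_adjacent_endpoints_of_matching:
  assumes M: "bipartite_matching M" and "(a\<^sub>0, b\<^sub>0) \<in> M"
    and T: "T \<subseteq> M - {(a\<^sub>0, b\<^sub>0)}" "T' \<subseteq> M - {(a\<^sub>0, b\<^sub>0)}" "T \<noteq> T'"
  shows "skeleton_adjacent cut_polytope_Kbip (cut_vector (endpoints T)) (cut_vector (endpoints T'))"
proof (rule skeleton_adjacent_cut_polytope)
  have TM: "T \<subseteq> M" "T' \<subseteq> M" using T by auto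
  note endpoints = endpoints_of_matching_iff[OF M TM(1)] endpoints_of_matching_iff[OF M TM(2)]
  have "\<exists>p\<in>M. p \<in> T \<longleftrightarrow> p \<notin> T'" using T by blast
  then obtain a\<^sub>1 b\<^sub>1 where p\<^sub>1: "(a\<^sub>1, b\<^sub>1) \<in> M" "(a\<^sub>1, b\<^sub>1) \<in> T \<longleftrightarrow> (a\<^sub>1, b\<^sub>1) \<notin> T'"
    by auto
  show "cut_vector X = cut_vector (endpoints T) \<or> cut_vector X = cut_vector (endpoints T')"
    if "agrees_on_common_edges (endpoints T) (endpoints T') X" for X
    by (rule agreeing_cut_cases[of a\<^sub>1 _ _ b\<^sub>1 a\<^sub>0 b\<^sub>0])
      (use that T p\<^sub>1 endpoints[OF p\<^sub>1(1)] endpoints[OF \<open>(a\<^sub>0, b\<^sub>0) \<in> M\<close>] in auto)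
  show "cut_vector (endpoints T) \<noteq> cut_vector (endpoints T')"
    using inj_on_cut_vector_endpoints[OF assms(1,2)] T by (auto dest: inj_onD)
qed

lemma skeleton_clique_number_ge_matching:
  fixes M :: "('a::finite \<times> 'b::finite) set"
  assumes M: "bipartite_matching M" and "M \<noteq> {}"
  shows "skeleton_clique_number_ge (cut_polytope_Kbip :: (real^('a \<times> 'b)) set) (2 ^ (card M - 1))"
proof -
  obtain a\<^sub>0 b\<^sub>0 where p\<^sub>0: "(a\<^sub>0, b\<^sub>0) \<in> M" using \<open>M \<noteq> {}\<close> by auto
  define C where
    "C = (\<lambda>T. cut_vector (endpoints T) :: real^('a \<times> 'b)) ` Pow (M - {(a\<^sub>0, b\<^sub>0)})"
  have "card C = 2 ^ (card M - 1)"
    using inj_on_cut_vector_endpoints[OF M p\<^sub>0] p\<^sub>0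
    by (simp add: C_def card_image card_Pow card_Diff_singleton)
  moreover have "skeleton_clique cut_polytope_Kbip C"
    using skeleton_adjacent_endpoints_of_matching[OF M p\<^sub>0]
    by (auto simp: skeleton_clique_def C_def extreme_point_of_cut_polytope)
  ultimately show ?thesis
    unfolding skeleton_clique_number_ge_def by (intro exI[of _ C]) (simp add: C_def)
qed

lemma ex_bipartite_matching_card_min:
  "\<exists>M :: ('a::finite \<times> 'b::finite) set. bipartite_matching M \<and> card M = min CARD('a) CARD('b)"
proof -
  obtain A :: "'a set" where A: "card A = min CARD('a) CARD('b)"
    using obtain_subset_with_card_n[of _ "UNIV :: 'a set"] by (metis min.cobounded1)
  obtain B :: "'b set" where B: "card B = min CARD('a) CARD('b)"
    using obtain_subset_with_card_n[of _ "UNIV :: 'b set"] by (metis min.cobounded2)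
  obtain f where "bij_betw f A B"
    using finite_same_card_bij[of A B] A B by auto
  then have "inj_on f A" by (rule bij_betw_imp_inj_on)
  then have "bipartite_matching ((\<lambda>a. (a, f a)) ` A) \<and> card ((\<lambda>a. (a, f a)) ` A) = card A"
    by (auto simp: bipartite_matching_def inj_on_eq_iff card_image inj_on_def)
  then show ?thesis using A by metis
qed

text \<open>The bound holds for all nonempty parts.\<close>
theorem theorem9:
  assumes "CARD('a::finite) \<ge> 2" and "CARD('b::finite) \<ge> 2"
  shows "skeleton_clique_number_ge (cut_polytope_Kbip :: (real^('a \<times> 'b)) set)
           (2 ^ (min CARD('a) CARD('b) - 1))"
proof -
  obtain M :: "('a \<times> 'b) set" where M: "bipartite_matching M" "card M = min CARD('a) CARD('b)"
    using ex_bipartite_matching_card_min by blast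
  moreover have "min CARD('a) CARD('b) > 0" by (simp add: card_gt_0_iff)
  ultimately have "M \<noteq> {}" by (metis card.empty less_irrefl)
  then show ?thesis using skeleton_clique_number_ge_matching[OF M(1)] M(2) by simp
qed

end
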